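(* If $x\in\mathbb{R}$ satisfies $|x|\le1/8$ or $|x-T\pi|\le1/8$, then $\mathrm{Re}(H(x))\ge1/2$.
   Context: Rudin–Shapiro polynomials: $P_0(z)=Q_0(z)=1$ and for $s\ge0$, $P_{s+1}(z)=P_s(z)+z^{2^s}Q_s(z)$, $Q_{s+1}(z)=P_s(z)-z^{2^s}Q_s(z)$. Let $t$ be an odd positive integer and $T:=2^{t+10}$. For $x\in\mathbb{R}$ define $\alpha(x):=2^{-(t+1)/2}P_t(e^{ix/T})$, $\beta(x):=2^{-(t+1)/2}Q_t(e^{ix/T})$, and $H(x):=e^{ix}\alpha(x)+e^{2ix}\beta(x)$. *)

theory Defs
  imports "HOL-Analysis.Analysis"
begin

text \<open>Rudin--Shapiro polynomials, evaluated at a complex point z: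
  P_0 = Q_0 = 1, P_{s+1} = P_s + z^(2^s) Q_s, Q_{s+1} = P_s - z^(2^s) Q_s.\<close>
fun RS :: "nat \<Rightarrow> complex \<Rightarrow> complex \<times> complex" where
  "RS 0 z = (1, 1)"
| "RS (Suc s) z = (let (p, q) = RS s z in (p + z ^ (2 ^ s) * q, p - z ^ (2 ^ s) * q))"

definition RS_P :: "nat \<Rightarrow> complex \<Rightarrow> complex" where
  "RS_P s z = fst (RS s z)"

definition RS_Q :: "nat \<Rightarrow> complex \<Rightarrow> complex" where
  "RS_Q s z = snd (RS s z)"

definition RS_T :: "nat \<Rightarrow> real" where
  "RS_T t = 2 ^ (t + 10)"

definition RS_alpha :: "nat \<Rightarrow> real \<Rightarrow> complex" where
  "RS_alpha t x = complex_of_real (2 powr (- (real t + 1) / 2)) * RS_P t (cis (x / RS_T t))"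

definition RS_beta :: "nat \<Rightarrow> real \<Rightarrow> complex" where
  "RS_beta t x = complex_of_real (2 powr (- (real t + 1) / 2)) * RS_Q t (cis (x / RS_T t))"

definition RS_H :: "nat \<Rightarrow> real \<Rightarrow> complex" where
  "RS_H t x = cis x * RS_alpha t x + cis (2 * x) * RS_beta t x"

end

theory Submission
  imports Defs
begin

text \<open>For odd \<open>t = 2m + 1\<close> the pair \<open>(P\<^sub>t, Q\<^sub>t)\<close> equals \<open>(2\<^sup>m\<^sup>+\<^sup>1, 0)\<close> at \<open>z = 1\<close>
  and \<open>(0, 2\<^sup>m\<^sup>+\<^sup>1)\<close> at \<open>z = -1\<close>, so \<open>(\<alpha>, \<beta>)\<close> is \<open>(1, 0)\<close> at \<open>x = 0\<close> and \<open>(0, 1)\<close>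
  at \<open>x = T\<pi>\<close>. On the unit circle the map \<open>(p, q) \<mapsto> (p + wq, p - wq)\<close> scales norms
  by \<open>\<surd>2\<close>, which gives \<open>|(P\<^sub>s, Q\<^sub>s)| = \<surd>2\<^sup>s\<^sup>+\<^sup>1\<close> and, by induction on \<open>s\<close>, a Lipschitz
  bound \<open>\<surd>2\<^sup>s\<^sup>+\<^sup>1 2\<^sup>s\<close> for \<open>\<theta> \<mapsto> (P\<^sub>s(e\<^sup>i\<^sup>\<theta>), Q\<^sub>s(e\<^sup>i\<^sup>\<theta>))\<close>. After normalisation and the
  substitution \<open>\<theta> = x/T\<close>, the pair \<open>(\<alpha>, \<beta>)\<close> is \<open>1/1024\<close>-Lipschitz in \<open>x\<close>. Hence near the
  two points \<open>Re H(x)\<close> is within \<open>1/4096\<close> of \<open>cos x\<close>, resp. \<open>cos 2x\<close>, both \<open>\<ge> 31/32\<close>.\<close>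

lemma RS_eq_Pair: "RS s z = (RS_P s z, RS_Q s z)"
  by (simp add: RS_P_def RS_Q_def)

lemma RS_P_0 [simp]: "RS_P 0 z = 1"
  by (simp add: RS_P_def)

lemma RS_Q_0 [simp]: "RS_Q 0 z = 1"
  by (simp add: RS_Q_def)

lemma RS_P_Suc: "RS_P (Suc s) z = RS_P s z + z ^ 2 ^ s * RS_Q s z"
  by (simp add: RS_P_def RS_Q_def split: prod.splits)

lemma RS_Q_Suc: "RS_Q (Suc s) z = RS_P s z - z ^ 2 ^ s * RS_Q s z"
  by (simp add: RS_P_def RS_Q_def split: prod.splits)

lemma RS_Suc_eq_Pair: "RS (Suc s) z = (RS_P s z + z ^ 2 ^ s * RS_Q s z, RS_P s z - z ^ 2 ^ s * RS_Q s z)"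
  by (simp only: RS_eq_Pair[of "Suc s"] RS_P_Suc RS_Q_Suc)

declare RS.simps [simp del]

lemma parallelogram_law:
  fixes a b :: "'a::real_inner"
  shows "(norm (a + b))\<^sup>2 + (norm (a - b))\<^sup>2 = 2 * ((norm a)\<^sup>2 + (norm b)\<^sup>2)"
  by (simp add: power2_norm_eq_inner inner_add inner_diff inner_commute)

lemma norm_Pair_add_diff:
  fixes a b :: "'a::real_inner"
  shows "norm (a + b, a - b) = sqrt 2 * norm (a, b)"
  unfolding norm_Pair parallelogram_law by (simp add: real_sqrt_mult[symmetric] distrib_left)

lemma norm_Pair_mult_unit:
  fixes a b w :: complex
  assumes "cmod w = 1"
  shows "norm (a, w * b) = norm (a, b)"
  by (simp add: norm_Pair norm_mult assms)

lemma norm_RS: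
  assumes "cmod z = 1"
  shows "norm (RS s z) = sqrt 2 ^ (s + 1)"
proof (induction s)
  case 0
  show ?case by (simp add: RS_eq_Pair norm_Pair)
next
  case (Suc s)
  have "norm (RS (Suc s) z) = sqrt 2 * norm (RS_P s z, z ^ 2 ^ s * RS_Q s z)"
    by (simp add: RS_Suc_eq_Pair norm_Pair_add_diff)
  also have "\<dots> = sqrt 2 * norm (RS s z)"
    by (simp add: RS_eq_Pair norm_Pair_mult_unit norm_power assms)
  finally show ?case by (simp add: Suc)
qed

lemma norm_RS_Q_le:
  assumes "cmod z = 1"
  shows "cmod (RS_Q s z) \<le> sqrt 2 ^ (s + 1)"
  by (metis RS_eq_Pair norm_RS[OF assms] norm_snd_le)

lemma norm_RS_diff_le:
  assumes "cmod z = 1" "cmod z0 = 1"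
  shows "norm (RS s z - RS s z0) \<le> sqrt 2 ^ (s + 1) * (\<Sum>k<s. cmod (z ^ 2 ^ k - z0 ^ 2 ^ k))"
proof (induction s)
  case 0
  show ?case by (simp add: RS_eq_Pair)
next
  case (Suc s)
  define w w0 where "w = z ^ 2 ^ s" and "w0 = z0 ^ 2 ^ s"
  define a d where "a = RS_P s z - RS_P s z0" and "d = RS_Q s z - RS_Q s z0"
  define b where "b = w * d + (w - w0) * RS_Q s z0"
  have "cmod w = 1"
    by (simp add: w_def norm_power assms)
  have "norm (a, b) \<le> norm (a, w * d) + norm ((0::complex), (w - w0) * RS_Q s z0)"
    unfolding b_def by (metis add_0_right norm_triangle_ineq add_Pair)
  also have "\<dots> \<le> norm (RS s z - RS s z0) + cmod (w - w0) * sqrt 2 ^ (s + 1)"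
    using norm_RS_Q_le[OF assms(2), of s] \<open>cmod w = 1\<close>
    by (simp add: norm_Pair_mult_unit a_def d_def RS_eq_Pair norm_mult mult_left_mono)
  finally have "norm (a, b) \<le> sqrt 2 ^ (s + 1) * ((\<Sum>k<s. cmod (z ^ 2 ^ k - z0 ^ 2 ^ k)) + cmod (w - w0))"
    using Suc by (simp add: algebra_simps)
  moreover have "RS (Suc s) z - RS (Suc s) z0 = (a + b, a - b)"
    by (simp add: RS_Suc_eq_Pair a_def b_def d_def w_def w0_def algebra_simps)
  ultimately show ?case
    by (simp add: norm_Pair_add_diff w_def w0_def mult_left_mono)
qed

lemma norm_cis_diff_le: "cmod (cis a - cis b) \<le> \<bar>a - b\<bar>"
proof -
  have "(cmod (cis a - cis b))\<^sup>2 = (cos a - cos b)\<^sup>2 + (sin a - sin b)\<^sup>2"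
    by (simp add: cmod_power2)
  also have "\<dots> = 2 - 2 * cos (a - b)"
    by (simp add: power2_eq_square cos_diff algebra_simps)
  also have "\<dots> = 4 * (sin ((a - b) / 2))\<^sup>2"
    using cos_double_sin[of "(a - b) / 2"] by (simp only: mult_2 field_sum_of_halves)
  also have "\<dots> \<le> 4 * ((a - b) / 2)\<^sup>2"
    using abs_sin_x_le_abs_x[of "(a - b) / 2"] abs_le_square_iff by (metis mult_left_mono zero_le_numeral)
  also have "\<dots> = (a - b)\<^sup>2"
    by (simp add: power2_eq_square)
  finally show ?thesis
    by (metis abs_le_square_iff abs_norm_cancel)
qed

lemma sum_norm_cis_power_diff_le:
  "(\<Sum>k<s. cmod (cis a ^ 2 ^ k - cis b ^ 2 ^ k)) \<le> 2 ^ s * \<bar>a - b\<bar>"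
proof (induction s)
  case 0
  show ?case by simp
next
  case (Suc s)
  have "cmod (cis a ^ 2 ^ s - cis b ^ 2 ^ s) \<le> \<bar>2 ^ s * a - 2 ^ s * b\<bar>"
    using norm_cis_diff_le[of "2 ^ s * a" "2 ^ s * b"] by (simp add: Complex.DeMoivre)
  also have "\<dots> = 2 ^ s * \<bar>a - b\<bar>"
    by (simp add: abs_mult flip: right_diff_distrib)
  finally show ?case
    using Suc by (simp add: algebra_simps)
qed

lemma two_powr_minus_half_Suc: "2 powr (- (real t + 1) / 2) = inverse (sqrt 2 ^ (t + 1))"
proof -
  have "sqrt 2 ^ (t + 1) = 2 powr ((real t + 1) / 2)"
    by (simp add: powr_half_sqrt[symmetric] powr_power powr_add[symmetric] add_divide_distrib add.commute)
  then show ?thesis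
    by (simp only: minus_divide_left[symmetric] powr_minus)
qed

lemma RS_alpha_beta_eq:
  "(RS_alpha t x, RS_beta t x) = inverse (sqrt 2 ^ (t + 1)) *\<^sub>R RS t (cis (x / RS_T t))"
  unfolding RS_alpha_def RS_beta_def RS_eq_Pair two_powr_minus_half_Suc scaleR_Pair scaleR_conv_of_real ..

lemma norm_RS_alpha_beta_diff_le:
  "norm ((RS_alpha t x, RS_beta t x) - (RS_alpha t x0, RS_beta t x0)) \<le> \<bar>x - x0\<bar> / 1024"
proof -
  define T where "T = RS_T t"
  have "T > 0" by (simp add: T_def RS_T_def)
  have "norm (RS t (cis (x / T)) - RS t (cis (x0 / T)))
      \<le> sqrt 2 ^ (t + 1) * (\<Sum>k<t. cmod (cis (x / T) ^ 2 ^ k - cis (x0 / T) ^ 2 ^ k))"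
    by (rule norm_RS_diff_le) simp_all
  also have "\<dots> \<le> sqrt 2 ^ (t + 1) * (2 ^ t * \<bar>x / T - x0 / T\<bar>)"
    by (intro mult_left_mono sum_norm_cis_power_diff_le) simp
  also have "2 ^ t * \<bar>x / T - x0 / T\<bar> = \<bar>x - x0\<bar> / 1024"
    using \<open>T > 0\<close> by (simp add: T_def RS_T_def power_add field_simps)
  finally have "inverse (sqrt 2 ^ (t + 1)) * norm (RS t (cis (x / T)) - RS t (cis (x0 / T))) \<le> \<bar>x - x0\<bar> / 1024"
    by (simp add: field_simps)
  moreover have "(RS_alpha t x, RS_beta t x) - (RS_alpha t x0, RS_beta t x0)
      = inverse (sqrt 2 ^ (t + 1)) *\<^sub>R (RS t (cis (x / T)) - RS t (cis (x0 / T)))"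
    by (simp only: RS_alpha_beta_eq T_def scaleR_diff_right)
  ultimately show ?thesis
    by simp
qed

lemma RS_odd_at_1: "RS (2 * m + 1) 1 = (2 ^ (m + 1), 0)"
proof (induction m)
  case 0
  show ?case by (simp add: RS_Suc_eq_Pair)
next
  case (Suc m)
  have "RS_P (2 * m + 1) 1 = 2 ^ (m + 1)" "RS_Q (2 * m + 1) 1 = 0"
    using Suc.IH by (simp_all add: RS_P_def RS_Q_def)
  moreover have "2 * Suc m + 1 = Suc (Suc (2 * m + 1))" by simp
  ultimately show ?case
    by (simp only: RS_Suc_eq_Pair RS_P_Suc RS_Q_Suc) simp
qed

lemma RS_odd_at_minus_1: "RS (2 * m + 1) (- 1) = (0, 2 ^ (m + 1))"
proof (induction m)
  case 0
  show ?case by (simp add: RS_Suc_eq_Pair)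
next
  case (Suc m)
  have "RS_P (2 * m + 1) (- 1) = 0" "RS_Q (2 * m + 1) (- 1) = 2 ^ (m + 1)"
    using Suc.IH by (simp_all add: RS_P_def RS_Q_def)
  moreover have "2 * Suc m + 1 = Suc (Suc (2 * m + 1))" by simp
  moreover have "(- 1 :: complex) ^ 2 ^ Suc k = 1" for k
    by (simp add: power_mult)
  ultimately show ?case
    by (simp only: RS_Suc_eq_Pair RS_P_Suc RS_Q_Suc) simp
qed

lemma sqrt_2_power_Suc_odd:
  assumes "t = 2 * m + 1"
  shows "sqrt 2 ^ (t + 1) = 2 ^ (m + 1)"
proof -
  have "t + 1 = 2 * (m + 1)" using assms by simp
  then show ?thesis by (simp add: power_mult)
qed

lemma RS_alpha_beta_at_0:
  assumes "odd t"
  shows "(RS_alpha t 0, RS_beta t 0) = (1, 0)"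
proof -
  obtain m where t: "t = 2 * m + 1" using assms oddE by blast
  have "(RS_alpha t 0, RS_beta t 0) = inverse (2 ^ (m + 1)) *\<^sub>R RS t 1"
    by (simp only: RS_alpha_beta_eq sqrt_2_power_Suc_odd[OF t] div_0 cis_zero)
  also have "\<dots> = (1, 0)"
    unfolding t RS_odd_at_1 by (simp add: scaleR_conv_of_real field_simps)
  finally show ?thesis .
qed

lemma RS_alpha_beta_at_T_pi:
  assumes "odd t"
  shows "(RS_alpha t (RS_T t * pi), RS_beta t (RS_T t * pi)) = (0, 1)"
proof -
  obtain m where t: "t = 2 * m + 1" using assms oddE by blast
  have "RS_T t * pi / RS_T t = pi" by (simp add: RS_T_def)
  then have "(RS_alpha t (RS_T t * pi), RS_beta t (RS_T t * pi)) = inverse (2 ^ (m + 1)) *\<^sub>R RS t (- 1)"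
    by (simp only: RS_alpha_beta_eq sqrt_2_power_Suc_odd[OF t] cis_pi)
  also have "\<dots> = (0, 1)"
    unfolding t RS_odd_at_minus_1 by (simp add: scaleR_conv_of_real field_simps)
  finally show ?thesis .
qed

lemma Re_RS_H_ge:
  "Re (cis x * RS_alpha t x0 + cis (2 * x) * RS_beta t x0) - \<bar>x - x0\<bar> / 512 \<le> Re (RS_H t x)"
proof -
  define H0 where "H0 = cis x * RS_alpha t x0 + cis (2 * x) * RS_beta t x0"
  define da db where "da = RS_alpha t x - RS_alpha t x0" and "db = RS_beta t x - RS_beta t x0"
  have "norm (da, db) \<le> \<bar>x - x0\<bar> / 1024"
    using norm_RS_alpha_beta_diff_le[of t x x0] by (simp add: da_def db_def)
  have "RS_H t x - H0 = cis x * da + cis (2 * x) * db"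
    by (simp add: H0_def RS_H_def da_def db_def algebra_simps)
  also have "cmod \<dots> \<le> cmod (cis x * da) + cmod (cis (2 * x) * db)"
    by (rule norm_triangle_ineq)
  also have "\<dots> = cmod da + cmod db"
    by (simp add: norm_mult)
  also have "\<dots> \<le> \<bar>x - x0\<bar> / 512"
    using norm_fst_le[of da db] norm_snd_le[of db da] \<open>norm (da, db) \<le> \<bar>x - x0\<bar> / 1024\<close> by linarith
  finally have "cmod (RS_H t x - H0) \<le> \<bar>x - x0\<bar> / 512" .
  moreover have "Re H0 - Re (RS_H t x) \<le> cmod (RS_H t x - H0)"
    using abs_Re_le_cmod[of "RS_H t x - H0"] by (simp add: abs_le_iff)
  ultimately show ?thesis
    unfolding H0_def by linarith
qed

lemma one_minus_sqr_div_2_le_cos: "1 - u\<^sup>2 / 2 \<le> cos (u :: real)"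
proof -
  have "(sin (u / 2))\<^sup>2 \<le> (u / 2)\<^sup>2"
    using abs_sin_x_le_abs_x[of "u / 2"] abs_le_square_iff by blast
  then show ?thesis
    using cos_double_sin[of "u / 2"] by (simp add: power2_eq_square)
qed

lemma cos_2_mult_diff_RS_T_pi: "cos (2 * (x - RS_T t * pi)) = cos (2 * x)"
proof -
  have "RS_T t \<in> \<int>" by (simp add: RS_T_def)
  then have "cis (2 * x) = cis (2 * (x - RS_T t * pi)) * cis (2 * pi * RS_T t)"
    by (simp add: cis_mult algebra_simps)
  with \<open>RS_T t \<in> \<int>\<close> have "cis (2 * (x - RS_T t * pi)) = cis (2 * x)"
    by simp
  from arg_cong[where f = Re, OF this] show ?thesis
    by simp
qed

theorem lemma3p9:
  fixes t :: nat and x :: real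
  assumes "odd t"
    and "\<bar>x\<bar> \<le> 1/8 \<or> \<bar>x - RS_T t * pi\<bar> \<le> 1/8"
  shows "Re (RS_H t x) \<ge> 1/2"
proof -
  have cos_ge: "31 / 32 \<le> cos u" if "\<bar>u\<bar> \<le> 1 / 4" for u :: real
  proof -
    have "u\<^sup>2 \<le> (1 / 4)\<^sup>2" using that abs_le_square_iff by fastforce
    then show ?thesis using one_minus_sqr_div_2_le_cos[of u] by (simp add: power2_eq_square)
  qed
  from assms(2) show ?thesis
  proof
    assume "\<bar>x\<bar> \<le> 1/8"
    then show ?thesis
      using Re_RS_H_ge[of x t 0] RS_alpha_beta_at_0[OF assms(1)] cos_ge[of x] by simp
  next
    assume near: "\<bar>x - RS_T t * pi\<bar> \<le> 1/8"
    have "\<bar>2 * (x - RS_T t * pi)\<bar> \<le> 1 / 4"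
      using near by (simp only: abs_mult abs_numeral) simp
    then have "31 / 32 \<le> cos (2 * x)"
      by (simp only: cos_ge flip: cos_2_mult_diff_RS_T_pi[of x t])
    then show ?thesis
      using Re_RS_H_ge[of x t "RS_T t * pi"] RS_alpha_beta_at_T_pi[OF assms(1)] near by simp
  qed
qed

end
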